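(* Let $\mathcal{A},\mathcal{B}\in\operatorname{Sym}(k,\mathbb{R})$ with $\mathcal{A}$ positive definite, let $\xi\in\mathbb{R}^k$, and put $f(x)={}^tx\mathcal{A}x-1$, $g(x)={}^tx\mathcal{B}x+\xi\cdot x-1$. Suppose that for all $x\in\mathbb{R}^k$, $f(x)\le0$ implies $g(x)\le0$. Then $\operatorname{tr}\mathcal{A}\ge\operatorname{tr}\mathcal{B}$; moreover, either $f=g$ or $\operatorname{tr}\mathcal{A}>\operatorname{tr}\mathcal{B}$. *)

theory Defs
  imports "HOL-Analysis.Analysis"
begin

definition sym_matrix :: "real^'k^'k \<Rightarrow> bool" where
  "sym_matrix M \<longleftrightarrow> transpose M = M"

definition pos_def_matrix :: "real^'k^'k \<Rightarrow> bool" where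
  "pos_def_matrix M \<longleftrightarrow> sym_matrix M \<and> (\<forall>x. x \<noteq> 0 \<longrightarrow> x \<bullet> (M *v x) > 0)"

end

theory Submission
  imports Defs
begin

(* Since x and -x lie in the ellipsoid {x A x \<le> 1} together, the inclusion forces
   |\<xi> \<bullet> y| \<le> 1 - y B y on its boundary y A y = 1.  By homogeneity A - B is positive
   semidefinite, so its diagonal and hence its trace are nonnegative.  If the traces agree,
   the positive semidefinite matrix A - B has zero diagonal and therefore vanishes, and then
   the boundary estimate reads \<xi> \<bullet> y = 0 for all boundary points, i.e. \<xi> = 0. *)

definition pos_semidef_matrix :: "real^'k^'k \<Rightarrow> bool" where
  "pos_semidef_matrix M \<longleftrightarrow> sym_matrix M \<and> (\<forall>x. 0 \<le> x \<bullet> (M *v x))"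

lemma quadratic_form_scaleR:
  fixes M :: "real^'k^'k"
  shows "(c *\<^sub>R x) \<bullet> (M *v (c *\<^sub>R x)) = c\<^sup>2 * (x \<bullet> (M *v x))"
  by (simp add: matrix_vector_mult_scaleR power2_eq_square)

lemma inner_axis_matrix_vector_axis:
  fixes M :: "real^'k^'k"
  shows "axis i 1 \<bullet> (M *v axis j 1) = M$i$j"
  by (simp add: matrix_vector_mult_basis column_def inner_axis')

lemma sym_matrix_inner_commute:
  fixes M :: "real^'k^'k"
  assumes "sym_matrix M"
  shows "x \<bullet> (M *v y) = y \<bullet> (M *v x)"
proof -
  have "x \<bullet> (M *v y) = (x v* M) \<bullet> y"
    by (simp add: dot_lmul_matrix)
  also have "x v* M = M *v x"
    using vector_transpose_matrix[of x M] assms unfolding sym_matrix_def by metis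
  finally show ?thesis
    by (simp add: inner_commute)
qed

lemma sym_matrix_diff:
  fixes A B :: "real^'k^'k"
  assumes "sym_matrix A" and "sym_matrix B"
  shows "sym_matrix (A - B)"
  using assms by (simp add: sym_matrix_def transpose_def vec_eq_iff)

lemma quadratic_form_add:
  fixes M :: "real^'k^'k"
  assumes "sym_matrix M"
  shows "(x + y) \<bullet> (M *v (x + y)) = x \<bullet> (M *v x) + 2 * (x \<bullet> (M *v y)) + y \<bullet> (M *v y)"
  using sym_matrix_inner_commute[OF assms, of y x]
  by (simp add: matrix_vector_right_distrib inner_add_left inner_add_right)

lemma pos_semidef_matrix_diag_nonneg:
  assumes "pos_semidef_matrix M"
  shows "0 \<le> M$i$i"
  using assms inner_axis_matrix_vector_axis[of i M i] unfolding pos_semidef_matrix_def by metis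

lemma pos_semidef_matrix_trace_nonneg:
  assumes "pos_semidef_matrix M"
  shows "0 \<le> trace M"
  unfolding trace_def by (intro sum_nonneg pos_semidef_matrix_diag_nonneg[OF assms])

lemma pos_semidef_matrix_zero_diag_imp_zero:
  assumes psd: "pos_semidef_matrix M" and diag: "\<And>i. M$i$i = 0"
  shows "M = 0"
proof -
  have "M$i$j = 0" for i j
  proof -
    let ?e = "\<lambda>i. axis i (1::real) :: real^'k"
    have sym: "sym_matrix M" and nonneg: "\<And>x. 0 \<le> x \<bullet> (M *v x)"
      using psd by (auto simp: pos_semidef_matrix_def)
    have "0 \<le> (?e i + ?e j) \<bullet> (M *v (?e i + ?e j))"
      by (rule nonneg)
    then have "0 \<le> M$i$j"
      by (simp add: quadratic_form_add[OF sym] inner_axis_matrix_vector_axis diag)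
    moreover have "0 \<le> (?e i + - ?e j) \<bullet> (M *v (?e i + - ?e j))"
      by (rule nonneg)
    then have "0 \<le> - M$i$j"
      by (simp only: quadratic_form_add[OF sym]) (simp add: vec.neg inner_axis_matrix_vector_axis diag)
    ultimately show ?thesis
      by linarith
  qed
  then show ?thesis
    by (simp add: vec_eq_iff)
qed

lemma pos_semidef_matrix_trace_zero_imp_zero:
  assumes psd: "pos_semidef_matrix M" and "trace M = 0"
  shows "M = 0"
proof (rule pos_semidef_matrix_zero_diag_imp_zero[OF psd])
  fix i
  show "M$i$i = 0"
    using assms sum_nonneg_eq_0_iff[of UNIV "\<lambda>i. M$i$i"] pos_semidef_matrix_diag_nonneg[OF psd]
    by (simp add: trace_def)
qed

lemma pos_def_matrix_normalize:
  assumes "pos_def_matrix A" and "x \<noteq> 0"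
  obtains c y where "x = c *\<^sub>R y" and "y \<bullet> (A *v y) = 1"
proof -
  define s where "s = x \<bullet> (A *v x)"
  have s: "0 < s"
    using assms by (simp add: s_def pos_def_matrix_def)
  have "x = sqrt s *\<^sub>R ((1 / sqrt s) *\<^sub>R x)"
    using s by simp
  moreover have "((1 / sqrt s) *\<^sub>R x) \<bullet> (A *v ((1 / sqrt s) *\<^sub>R x)) = 1"
    unfolding quadratic_form_scaleR using s by (simp add: power_divide s_def[symmetric])
  ultimately show thesis
    using that by blast
qed

context
  fixes A B :: "real^'k^'k" and \<xi> :: "real^'k"
  assumes inclusion: "\<And>x. x \<bullet> (A *v x) \<le> 1 \<Longrightarrow> x \<bullet> (B *v x) + \<xi> \<bullet> x \<le> 1"
begin

lemma ellipsoid_inclusion_boundary_bound: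
  assumes "y \<bullet> (A *v y) = 1"
  shows "\<bar>\<xi> \<bullet> y\<bar> \<le> 1 - y \<bullet> (B *v y)"
proof -
  have "y \<bullet> (B *v y) + \<xi> \<bullet> y \<le> 1"
    using inclusion assms by simp
  moreover have "(-y) \<bullet> (B *v (-y)) + \<xi> \<bullet> (-y) \<le> 1"
    using inclusion[of "-y"] assms by (simp add: vec.neg)
  ultimately show ?thesis
    by (simp add: vec.neg)
qed

lemma ellipsoid_inclusion_pos_semidef_diff:
  assumes "pos_def_matrix A" and "sym_matrix B"
  shows "pos_semidef_matrix (A - B)"
proof -
  have "x \<bullet> (B *v x) \<le> x \<bullet> (A *v x)" for x
  proof (cases "x = 0")
    case False
    then obtain c y where x: "x = c *\<^sub>R y" and y: "y \<bullet> (A *v y) = 1"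
      using pos_def_matrix_normalize[OF assms(1)] by blast
    have "y \<bullet> (B *v y) \<le> 1"
      using ellipsoid_inclusion_boundary_bound[OF y] by linarith
    then have "c\<^sup>2 * (y \<bullet> (B *v y)) \<le> c\<^sup>2 * (y \<bullet> (A *v y))"
      using y by (simp add: mult_left_le)
    then show ?thesis
      unfolding x quadratic_form_scaleR .
  qed simp
  then show ?thesis
    using assms sym_matrix_diff[of A B]
    by (simp add: pos_semidef_matrix_def pos_def_matrix_def matrix_vector_mult_diff_rdistrib inner_diff_right)
qed

end

lemma ellipsoid_self_inclusion_imp_zero:
  fixes A :: "real^'k^'k" and \<xi> :: "real^'k"
  assumes "pos_def_matrix A"
    and inclusion: "\<And>x. x \<bullet> (A *v x) \<le> 1 \<Longrightarrow> x \<bullet> (A *v x) + \<xi> \<bullet> x \<le> 1"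
  shows "\<xi> = 0"
proof (rule ccontr)
  assume "\<xi> \<noteq> 0"
  then obtain c y where \<xi>: "\<xi> = c *\<^sub>R y" and y: "y \<bullet> (A *v y) = 1"
    using pos_def_matrix_normalize[OF assms(1)] by blast
  have "\<xi> \<bullet> y = 0"
    using ellipsoid_inclusion_boundary_bound[OF inclusion y] y by simp
  then have "\<xi> \<bullet> \<xi> = 0"
    by (subst (2) \<xi>) simp
  with \<open>\<xi> \<noteq> 0\<close> show False
    by simp
qed

theorem lemma2p3:
  fixes A B :: "real^'k^'k" and \<xi> :: "real^'k"
    and f g :: "real^'k \<Rightarrow> real"
  assumes "sym_matrix A" and "sym_matrix B" and "pos_def_matrix A"
    and "\<And>x. f x = x \<bullet> (A *v x) - 1"
    and "\<And>x. g x = x \<bullet> (B *v x) + \<xi> \<bullet> x - 1"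
    and "\<And>x. f x \<le> 0 \<Longrightarrow> g x \<le> 0"
  shows "trace A \<ge> trace B \<and> (f = g \<or> trace A > trace B)"
proof -
  have inclusion: "x \<bullet> (A *v x) \<le> 1 \<Longrightarrow> x \<bullet> (B *v x) + \<xi> \<bullet> x \<le> 1" for x
    using assms(4-6)[of x] by simp
  have psd: "pos_semidef_matrix (A - B)"
    using ellipsoid_inclusion_pos_semidef_diff[OF inclusion assms(3,2)] .
  have "trace B \<le> trace A"
    using pos_semidef_matrix_trace_nonneg[OF psd] by (simp add: trace_sub)
  moreover have "f = g" if "trace A = trace B"
  proof -
    have "A = B"
      using pos_semidef_matrix_trace_zero_imp_zero[OF psd] that by (simp add: trace_sub)
    moreover have "\<xi> = 0"
      using ellipsoid_self_inclusion_imp_zero[OF assms(3)] inclusion \<open>A = B\<close> by blast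
    ultimately show ?thesis
      using assms(4,5) by auto
  qed
  ultimately show ?thesis
    by linarith
qed

end
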